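(* Let $(M,\mathcal T)$ be a closed pseudo 3-manifold with edge set $E$. If a solution $l(t)$ of the extended Ricci flow $\frac{d}{dt}l(t)=\widetilde K(l(t))$ converges to some $\widetilde l\in\mathbb R^E$ as $t\to+\infty$, then $\widetilde K(\widetilde l)=0$.
   Context: Closed pseudo 3-manifold $(M,\mathcal T)$: quotient of a disjoint union $\mathscr T$ of finitely many tetrahedra by affine isomorphisms pairing faces, every 2-face being paired with another; $E$ is the set of edge classes. For a tetrahedron $\sigma$ with vertices $v_1,\dots,v_4$ and $l\in\mathbb R^E$, $l_\sigma=(l_{ij})\in\mathbb R^6$, $l_{ij}=l(\text{class of } v_iv_j)$. Extended dihedral angles: for $(x_1,x_2,x_3)\in\mathbb R^3_{>0}$, $a_i$ is the Euclidean angle opposite $x_i$ if strict triangle inequalities hold, and $a_i=\pi$, $a_j=a_k=0$ if $x_i\ge x_j+x_k$. For $l\in\mathbb R^6$, $\{i,j,k,h\}=\{1,2,3,4\}$, $\alpha_{ij}(l)$ is the generalized angle opposite the side $e^{(l_{ij}+l_{kh})/2}$ in the generalized triangle with sides $e^{(l_{ij}+l_{kh})/2},e^{(l_{ik}+l_{jh})/2},e^{(l_{ih}+l_{jk})/2}$. The generalized Ricci curvature of $l\in\mathbb R^E$ is $\widetilde K_e(l)=2\pi-\sum\alpha_{ij}(l_\sigma)$, summed over pairs (tetrahedron $\sigma$, edge $v_iv_j$ of $\sigma$ in class $e$). *)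

theory Defs
  imports "HOL-Analysis.Analysis"
begin

(* Tetrahedra are the elements of a finite type 't; each tetrahedron has vertices 0,1,2,3.
   A 2-face of tetrahedron s is encoded as (s,k): the face opposite vertex k (k < 4).
   A face pairing is given by  p  (which face a face is glued to) and  phi  (the vertex
   bijection realising the affine isomorphism of the two faces). *)

definition closed_pseudo3 ::
  "('t \<times> nat \<Rightarrow> 't \<times> nat) \<Rightarrow> ('t \<times> nat \<Rightarrow> nat \<Rightarrow> nat) \<Rightarrow> bool" where
  "closed_pseudo3 p phi \<longleftrightarrow>
     finite (UNIV :: 't set) \<and>
     (\<forall>f. snd f < 4 \<longrightarrow>
        snd (p f) < 4 \<and> p f \<noteq> f \<and> p (p f) = f \<and>
        bij_betw (phi f) ({0..<4} - {snd f}) ({0..<4} - {snd (p f)}) \<and>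
        (\<forall>v \<in> {0..<4} - {snd f}. phi (p f) (phi f v) = v))"

definition tet_edges :: "('t \<times> nat set) set" where
  "tet_edges = {(s, {i, j}) | s i j. i < 4 \<and> j < 4 \<and> i \<noteq> j}"

definition glue_rel ::
  "('t \<times> nat \<Rightarrow> 't \<times> nat) \<Rightarrow> ('t \<times> nat \<Rightarrow> nat \<Rightarrow> nat)
     \<Rightarrow> (('t \<times> nat set) \<times> ('t \<times> nat set)) set" where
  "glue_rel p phi = {((s, {i, j}), (fst (p (s, k)), {phi (s, k) i, phi (s, k) j})) | s k i j.
      k < 4 \<and> i < 4 \<and> j < 4 \<and> i \<noteq> j \<and> i \<noteq> k \<and> j \<noteq> k}"

definition edge_class ::
  "('t \<times> nat \<Rightarrow> 't \<times> nat) \<Rightarrow> ('t \<times> nat \<Rightarrow> nat \<Rightarrow> nat)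
     \<Rightarrow> 't \<times> nat set \<Rightarrow> ('t \<times> nat set) set" where
  "edge_class p phi x = ((glue_rel p phi \<union> (glue_rel p phi)\<inverse>)\<^sup>*) `` {x}"

definition edge_classes ::
  "('t \<times> nat \<Rightarrow> 't \<times> nat) \<Rightarrow> ('t \<times> nat \<Rightarrow> nat \<Rightarrow> nat)
     \<Rightarrow> ('t \<times> nat set) set set" where
  "edge_classes p phi = edge_class p phi ` tet_edges"

definition ext_angle :: "real \<Rightarrow> real \<Rightarrow> real \<Rightarrow> real" where
  "ext_angle x1 x2 x3 =
     (if x1 \<ge> x2 + x3 then pi
      else if x2 \<ge> x1 + x3 \<or> x3 \<ge> x1 + x2 then 0
      else arccos ((x2\<^sup>2 + x3\<^sup>2 - x1\<^sup>2) / (2 * x2 * x3)))"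

definition lsig ::
  "('t \<times> nat \<Rightarrow> 't \<times> nat) \<Rightarrow> ('t \<times> nat \<Rightarrow> nat \<Rightarrow> nat)
     \<Rightarrow> (('t \<times> nat set) set \<Rightarrow> real) \<Rightarrow> 't \<Rightarrow> nat \<Rightarrow> nat \<Rightarrow> real" where
  "lsig p phi l s i j = l (edge_class p phi (s, {i, j}))"

definition gen_alpha ::
  "('t \<times> nat \<Rightarrow> 't \<times> nat) \<Rightarrow> ('t \<times> nat \<Rightarrow> nat \<Rightarrow> nat)
     \<Rightarrow> (('t \<times> nat set) set \<Rightarrow> real) \<Rightarrow> 't \<Rightarrow> nat set \<Rightarrow> real" where
  "gen_alpha p phi l s e =
     (let i = Min e; j = Max e; k = Min ({0..<4} - e); h = Max ({0..<4} - e);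
          L = lsig p phi l s
      in ext_angle (exp ((L i j + L k h) / 2))
                   (exp ((L i k + L j h) / 2))
                   (exp ((L i h + L j k) / 2)))"

definition gen_ricci ::
  "('t \<times> nat \<Rightarrow> 't \<times> nat) \<Rightarrow> ('t \<times> nat \<Rightarrow> nat \<Rightarrow> nat)
     \<Rightarrow> (('t \<times> nat set) set \<Rightarrow> real) \<Rightarrow> ('t \<times> nat set) set \<Rightarrow> real" where
  "gen_ricci p phi l c = 2 * pi - (\<Sum>(s, e) \<in> c. gen_alpha p phi l s e)"

end

theory Submission
  imports Defs
begin

text \<open>The extended angle opposite \<open>x\<^sub>1\<close> equals \<open>arccos\<close> of the law-of-cosines ratio
clamped to \<open>[-1, 1]\<close>, so it is continuous on positive side lengths; the sides
\<open>exp ((l\<^sub>i\<^sub>j + l\<^sub>k\<^sub>h) / 2)\<close> are always positive, hence the curvature is continuous in \<open>l\<close>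
and \<open>K(l(t)) \<longrightarrow> K(l\<^sub>\<infinity>)\<close>. By the mean value theorem \<open>l(t+1) - l(t) = K(l(\<xi>))\<close> for some
\<open>\<xi> \<in> [t, t+1]\<close>; the left side tends to \<open>0\<close> because \<open>l\<close> converges, so the limit
\<open>K(l\<^sub>\<infinity>)\<close> of the derivative vanishes.\<close>

lemma limit_of_derivative_eq_0:
  fixes f f' :: "real \<Rightarrow> real"
  assumes der: "\<forall>t\<ge>T. (f has_real_derivative f' t) (at t within {T..})"
    and f_lim: "(f \<longlongrightarrow> a) at_top"
    and f'_lim: "(f' \<longlongrightarrow> L) at_top"
  shows "L = 0"
proof -
  have "\<exists>z\<in>{t..t+1}. f (t + 1) - f t = f' z" if "t \<ge> T" for t
  proof -
    have "(f has_derivative (\<lambda>h. h * f' x)) (at x within {t..t+1})" if "t \<le> x" for x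
    proof -
      have "(f has_real_derivative f' x) (at x within {T..})"
        using der \<open>t \<ge> T\<close> that by simp
      then have "(f has_real_derivative f' x) (at x within {t..t+1})"
        by (rule DERIV_subset) (use \<open>t \<ge> T\<close> in auto)
      then show ?thesis by (simp add: has_field_derivative_def mult_commute_abs)
    qed
    from mvt_very_simple[of t "t + 1" f, OF _ this] show ?thesis by simp
  qed
  then obtain \<xi> where \<xi>: "\<And>t. t \<ge> T \<Longrightarrow> t \<le> \<xi> t \<and> f (t + 1) - f t = f' (\<xi> t)"
    by (metis atLeastAtMost_iff)
  have step_eq: "\<forall>\<^sub>F t in at_top. f (t + 1) - f t = f' (\<xi> t)"
    using eventually_ge_at_top[of T] by eventually_elim (use \<xi> in blast)
  have "filterlim \<xi> at_top at_top"
  proof (rule filterlim_at_top_mono[OF filterlim_ident])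
    show "\<forall>\<^sub>F t in at_top. t \<le> \<xi> t"
      using eventually_ge_at_top[of T] by eventually_elim (use \<xi> in blast)
  qed
  then have "((\<lambda>t. f' (\<xi> t)) \<longlongrightarrow> L) at_top"
    by (rule filterlim_compose[OF f'_lim])
  then have "((\<lambda>t. f (t + 1) - f t) \<longlongrightarrow> L) at_top"
    using step_eq by (simp add: tendsto_cong)
  moreover have "filterlim (\<lambda>t::real. t + 1) at_top at_top"
    by (rule filterlim_at_top_mono[OF filterlim_ident]) simp
  then have "((\<lambda>t. f (t + 1) - f t) \<longlongrightarrow> a - a) at_top"
    by (intro tendsto_diff f_lim filterlim_compose[OF f_lim])
  ultimately have "L = a - a"
    by (rule tendsto_unique[OF trivial_limit_at_top_linorder])
  then show "L = 0" by simp
qed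

lemma ext_angle_eq_arccos_clamped:
  assumes "x1 > 0" "x2 > 0" "x3 > 0"
  shows "ext_angle x1 x2 x3 =
    arccos (max (-1) (min 1 ((x2\<^sup>2 + x3\<^sup>2 - x1\<^sup>2) / (2 * x2 * x3))))"
proof -
  define r where "r = (x2\<^sup>2 + x3\<^sup>2 - x1\<^sup>2) / (2 * x2 * x3)"
  have denom: "2 * x2 * x3 > 0" using assms by simp
  have r_le: "r \<le> -1 \<longleftrightarrow> x2 + x3 \<le> x1"
  proof -
    have "r \<le> -1 \<longleftrightarrow> (x2 + x3)\<^sup>2 \<le> x1\<^sup>2"
      unfolding r_def using denom by (simp add: divide_le_eq power2_eq_square algebra_simps)
    also have "\<dots> \<longleftrightarrow> x2 + x3 \<le> x1"
      using assms by (simp add: power_mono_iff)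
    finally show ?thesis .
  qed
  have r_ge: "r \<ge> 1 \<longleftrightarrow> x1 + x3 \<le> x2 \<or> x1 + x2 \<le> x3"
  proof -
    have "r \<ge> 1 \<longleftrightarrow> x1\<^sup>2 \<le> (x2 - x3)\<^sup>2"
      unfolding r_def using denom by (simp add: le_divide_eq power2_eq_square algebra_simps)
    also have "\<dots> \<longleftrightarrow> x1 \<le> \<bar>x2 - x3\<bar>"
      using assms by (metis abs_le_square_iff abs_of_pos)
    also have "\<dots> \<longleftrightarrow> x1 + x3 \<le> x2 \<or> x1 + x2 \<le> x3"
      by linarith
    finally show ?thesis .
  qed
  have "ext_angle x1 x2 x3 = arccos (max (-1) (min 1 r))"
    using r_le r_ge by (auto simp: ext_angle_def r_def[symmetric] max_def min_def)
  then show ?thesis unfolding r_def .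
qed

lemma tendsto_ext_angle:
  assumes "(a \<longlongrightarrow> a0) F" "(b \<longlongrightarrow> b0) F" "(c \<longlongrightarrow> c0) F"
    and "a0 > 0" "b0 > 0" "c0 > 0"
  shows "((\<lambda>x. ext_angle (a x) (b x) (c x)) \<longlongrightarrow> ext_angle a0 b0 c0) F"
proof -
  define clamp where "clamp u = max (-1) (min 1 u)" for u :: real
  have "((\<lambda>x. arccos (clamp (((b x)\<^sup>2 + (c x)\<^sup>2 - (a x)\<^sup>2) / (2 * b x * c x))))
          \<longlongrightarrow> arccos (clamp ((b0\<^sup>2 + c0\<^sup>2 - a0\<^sup>2) / (2 * b0 * c0)))) F"
    unfolding clamp_def using assms(5,6)
    by (intro continuous_on_tendsto_compose[OF continuous_on_arccos'] tendsto_intros assms(1-3))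
      auto
  then have "((\<lambda>x. arccos (clamp (((b x)\<^sup>2 + (c x)\<^sup>2 - (a x)\<^sup>2) / (2 * b x * c x))))
          \<longlongrightarrow> ext_angle a0 b0 c0) F"
    using ext_angle_eq_arccos_clamped[OF assms(4-6)] by (simp add: clamp_def)
  moreover have "\<forall>\<^sub>F x in F. a x > 0" "\<forall>\<^sub>F x in F. b x > 0" "\<forall>\<^sub>F x in F. c x > 0"
    using assms order_tendstoD(1) by blast+
  then have "\<forall>\<^sub>F x in F. arccos (clamp (((b x)\<^sup>2 + (c x)\<^sup>2 - (a x)\<^sup>2) / (2 * b x * c x)))
      = ext_angle (a x) (b x) (c x)"
    by eventually_elim (simp add: clamp_def ext_angle_eq_arccos_clamped)
  ultimately show ?thesis by (rule Lim_transform_eventually)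
qed

lemma glue_rel_tet_edges:
  assumes "closed_pseudo3 p phi" "(x, y) \<in> glue_rel p phi"
  shows "x \<in> tet_edges" "y \<in> tet_edges"
proof -
  obtain s k i j where xy: "x = (s, {i, j})" "y = (fst (p (s, k)), {phi (s, k) i, phi (s, k) j})"
    and ijk: "k < 4" "i < 4" "j < 4" "i \<noteq> j" "i \<noteq> k" "j \<noteq> k"
    using assms(2) unfolding glue_rel_def by blast
  have bij: "bij_betw (phi (s, k)) ({0..<4} - {k}) ({0..<4} - {snd (p (s, k))})"
    using assms(1) ijk(1) unfolding closed_pseudo3_def by auto
  have "phi (s, k) i < 4" "phi (s, k) j < 4"
    using bij_betw_apply[OF bij] ijk by auto
  moreover have "phi (s, k) i \<noteq> phi (s, k) j"
    using bij_betw_imp_inj_on[OF bij] ijk by (auto simp: inj_on_def)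
  ultimately show "x \<in> tet_edges" "y \<in> tet_edges"
    using xy ijk unfolding tet_edges_def by blast+
qed

lemma edge_classes_subset_tet_edges:
  assumes "closed_pseudo3 p phi" "c \<in> edge_classes p phi"
  shows "c \<subseteq> tet_edges"
proof
  fix y assume "y \<in> c"
  obtain x where x: "x \<in> tet_edges" "c = edge_class p phi x"
    using assms(2) unfolding edge_classes_def by auto
  have "(x, y) \<in> (glue_rel p phi \<union> (glue_rel p phi)\<inverse>)\<^sup>*"
    using \<open>y \<in> c\<close> x(2) unfolding edge_class_def by auto
  then show "y \<in> tet_edges"
    by (induction rule: rtrancl_induct) (use x(1) glue_rel_tet_edges[OF assms(1)] in blast)+
qed

lemma edge_class_in_edge_classes:
  assumes "a < 4" "b < 4" "a \<noteq> b"
  shows "edge_class p phi (s, {a, b}) \<in> edge_classes p phi"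
  using assms unfolding edge_classes_def tet_edges_def by blast

lemma edge_and_opposite_edge_vertices:
  fixes e :: "nat set"
  assumes "e = {i, j}" "i < 4" "j < 4" "i \<noteq> j"
  shows "distinct [Min e, Max e, Min ({0..<4} - e), Max ({0..<4} - e)]"
    and "set [Min e, Max e, Min ({0..<4} - e), Max ({0..<4} - e)] \<subseteq> {..<4}"
proof -
  have "card ({0..<4::nat} - e) = 2"
    using assms by (simp add: card_Diff_subset)
  then obtain k h where kh: "{0..<4} - e = {k, h}" "k \<noteq> h"
    by (auto simp: card_2_iff)
  have "k \<in> {0..<4} - e" "h \<in> {0..<4} - e"
    unfolding kh(1) by simp_all
  then have "k < 4" "h < 4" "k \<notin> {i, j}" "h \<notin> {i, j}"
    using assms(1) by simp_all
  then show "distinct [Min e, Max e, Min ({0..<4} - e), Max ({0..<4} - e)]"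
    and "set [Min e, Max e, Min ({0..<4} - e), Max ({0..<4} - e)] \<subseteq> {..<4}"
    using kh(2) assms unfolding kh(1) by (auto simp: min_def max_def)
qed

lemma tendsto_gen_alpha:
  assumes lim: "\<And>a b. a < 4 \<Longrightarrow> b < 4 \<Longrightarrow> a \<noteq> b \<Longrightarrow>
      ((\<lambda>t. lsig p phi (l t) s a b) \<longlongrightarrow> lsig p phi lt s a b) F"
    and "(s, e) \<in> tet_edges"
  shows "((\<lambda>t. gen_alpha p phi (l t) s e) \<longlongrightarrow> gen_alpha p phi lt s e) F"
proof -
  obtain i j where ij: "e = {i, j}" "i < 4" "j < 4" "i \<noteq> j"
    using assms(2) unfolding tet_edges_def by blast
  define a b k h where "a = Min e" "b = Max e" "k = Min ({0..<4} - e)" "h = Max ({0..<4} - e)"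
  have abkh: "distinct [a, b, k, h]" "set [a, b, k, h] \<subseteq> {..<4}"
    unfolding a_b_k_h_def by (rule edge_and_opposite_edge_vertices[OF ij])+
  have side: "((\<lambda>t. exp ((lsig p phi (l t) s x y + lsig p phi (l t) s u v) / 2)) \<longlongrightarrow>
      exp ((lsig p phi lt s x y + lsig p phi lt s u v) / 2)) F"
    if "x \<noteq> y" "u \<noteq> v" "{x, y, u, v} \<subseteq> {a, b, k, h}" for x y u v
    using that abkh by (intro tendsto_intros lim) auto
  show ?thesis
    unfolding gen_alpha_def Let_def a_b_k_h_def[symmetric]
    by (rule tendsto_ext_angle[OF side side side]) (use abkh in auto)
qed

lemma tendsto_gen_ricci:
  assumes "closed_pseudo3 p phi" "c \<in> edge_classes p phi"
    and lim: "\<forall>c\<in>edge_classes p phi. ((\<lambda>t. l t c) \<longlongrightarrow> lt c) F"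
  shows "((\<lambda>t. gen_ricci p phi (l t) c) \<longlongrightarrow> gen_ricci p phi lt c) F"
  unfolding gen_ricci_def
proof (intro tendsto_diff tendsto_const tendsto_sum, clarify)
  fix s e assume "(s, e) \<in> c"
  then have "(s, e) \<in> tet_edges"
    using edge_classes_subset_tet_edges[OF assms(1,2)] by blast
  moreover have "((\<lambda>t. lsig p phi (l t) s a b) \<longlongrightarrow> lsig p phi lt s a b) F"
    if "a < 4" "b < 4" "a \<noteq> b" for a b
    using lim edge_class_in_edge_classes[OF that, of p phi s] unfolding lsig_def by blast
  ultimately show "((\<lambda>t. gen_alpha p phi (l t) s e) \<longlongrightarrow> gen_alpha p phi lt s e) F"
    by (intro tendsto_gen_alpha)
qed

theorem mainTheorem10:
  fixes p :: "'t \<times> nat \<Rightarrow> 't \<times> nat" and phi :: "'t \<times> nat \<Rightarrow> nat \<Rightarrow> nat"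
    and l :: "real \<Rightarrow> ('t \<times> nat set) set \<Rightarrow> real"
    and lt :: "('t \<times> nat set) set \<Rightarrow> real"
  assumes "closed_pseudo3 p phi"
    and "\<forall>t\<ge>0. \<forall>c\<in>edge_classes p phi.
           ((\<lambda>s. l s c) has_real_derivative gen_ricci p phi (l t) c) (at t within {0..})"
    and "\<forall>c\<in>edge_classes p phi. ((\<lambda>t. l t c) \<longlongrightarrow> lt c) at_top"
  shows "\<forall>c\<in>edge_classes p phi. gen_ricci p phi lt c = 0"
proof
  fix c assume c: "c \<in> edge_classes p phi"
  show "gen_ricci p phi lt c = 0"
  proof (rule limit_of_derivative_eq_0)
    show "\<forall>t\<ge>0. ((\<lambda>s. l s c) has_real_derivative gen_ricci p phi (l t) c) (at t within {0..})"
      using assms(2) c by blast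
    show "((\<lambda>t. l t c) \<longlongrightarrow> lt c) at_top"
      using assms(3) c by blast
    show "((\<lambda>t. gen_ricci p phi (l t) c) \<longlongrightarrow> gen_ricci p phi lt c) at_top"
      by (rule tendsto_gen_ricci[OF assms(1) c assms(3)])
  qed
qed

end
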